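(* Let $(X,d,f)$ be a TDS, $\mu\in\mathcal M(X)$, $K\subset X$ a Borel set, $\alpha\ge0$, and $\varphi\in C(X,\mathbb R)$ with $\varphi>0$. For each $s\in(0,\infty)$: (1) if $P^\alpha_\mu(f,x,\varphi)\le s$ for all $x\in K$, then $\dim^\alpha_{BS}(f,K,\varphi)\le s$; (2) if $P^\alpha_\mu(f,x,\varphi)\ge s$ for all $x\in K$ and $\mu(K)>0$, then $\dim^\alpha_{BS}(f,K,\varphi)\ge s$.
   Context: A TDS $(X,d,f)$: compact metric space and continuous $f$; $\mathcal M(X)$ is the set of Borel probability measures on $X$. $S_n\varphi(x)=\sum_{j=0}^{n-1}\varphi(f^jx)$; $d_n^\alpha(x,y)=\max_{0\le i\le n-1}e^{\alpha i}d(f^ix,f^iy)$; $B_n^\alpha(x,\varepsilon)=\{y:d_n^\alpha(x,y)<\varepsilon\}$. $\alpha$-BS dimension: $M^\alpha(K,s,\varepsilon,n,\varphi)=\inf\sum_i\exp\big(-s\sup_{y\in B^\alpha_{n_i}(x_i,\varepsilon)}S_{n_i}\varphi(y)\big)$ over finite or countable families $\{B^\alpha_{n_i}(x_i,\varepsilon)\}$, $x_i\in X$, $n_i\ge n$, covering $K$; $M^\alpha(K,s,\varepsilon,\varphi)=\lim_n M^\alpha(K,s,\varepsilon,n,\varphi)$; $M^\alpha(K,\varepsilon,\varphi)=\inf\{s:M^\alpha(K,s,\varepsilon,\varphi)=0\}=\sup\{s:M^\alpha(K,s,\varepsilon,\varphi)=\infty\}$; $\dim^\alpha_{BS}(f,K,\varphi)=\lim_{\varepsilon\to0}M^\alpha(K,\varepsilon,\varphi)$.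 Pointwise $\alpha$-local Brin–Katok entropy: $P^\alpha_\mu(f,x,\varphi)=\lim_{\varepsilon\to0}\liminf_{n\to\infty}\frac{-\log\mu(B_n^\alpha(x,\varepsilon))}{S_n\varphi(x)}$. *)

theory Defs
  imports "HOL-Probability.Probability"
begin

definition dn_alpha :: "('a::metric_space \<Rightarrow> 'a) \<Rightarrow> real \<Rightarrow> nat \<Rightarrow> 'a \<Rightarrow> 'a \<Rightarrow> real" where
  "dn_alpha f \<alpha> n x y = (MAX i\<in>{..<n}. exp (\<alpha> * real i) * dist ((f ^^ i) x) ((f ^^ i) y))"

definition bowen_ball :: "'a::metric_space set \<Rightarrow> ('a \<Rightarrow> 'a) \<Rightarrow> real \<Rightarrow> nat \<Rightarrow> 'a \<Rightarrow> real \<Rightarrow> 'a set" where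
  "bowen_ball X f \<alpha> n x \<epsilon> = {y \<in> X. dn_alpha f \<alpha> n x y < \<epsilon>}"

definition birkhoff :: "('a \<Rightarrow> 'a) \<Rightarrow> ('a \<Rightarrow> real) \<Rightarrow> nat \<Rightarrow> 'a \<Rightarrow> real" where
  "birkhoff f \<phi> n x = (\<Sum>j<n. \<phi> ((f ^^ j) x))"

text \<open>M^alpha(K,s,eps,n,phi): infimum over finite or countable families of Bowen balls
  (indexed by a subset I of nat, centres c i in X, lengths m i >= n) covering K.\<close>
definition M_n :: "'a::metric_space set \<Rightarrow> ('a \<Rightarrow> 'a) \<Rightarrow> real \<Rightarrow> 'a set \<Rightarrow> real \<Rightarrow> real \<Rightarrow> nat
    \<Rightarrow> ('a \<Rightarrow> real) \<Rightarrow> ennreal" where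
  "M_n X f \<alpha> K s \<epsilon> n \<phi> =
    (INF F \<in> {(I, c, m) | (I::nat set) (c::nat \<Rightarrow> 'a) (m::nat \<Rightarrow> nat).
                 (\<forall>i\<in>I. c i \<in> X \<and> n \<le> m i) \<and> K \<subseteq> (\<Union>i\<in>I. bowen_ball X f \<alpha> (m i) (c i) \<epsilon>)}.
       (case F of (I, c, m) \<Rightarrow>
          \<integral>\<^sup>+ i. ennreal (exp (- s * (SUP y\<in>bowen_ball X f \<alpha> (m i) (c i) \<epsilon>. birkhoff f \<phi> (m i) y)))
            \<partial>count_space I))"

definition M_s :: "'a::metric_space set \<Rightarrow> ('a \<Rightarrow> 'a) \<Rightarrow> real \<Rightarrow> 'a set \<Rightarrow> real \<Rightarrow> real
    \<Rightarrow> ('a \<Rightarrow> real) \<Rightarrow> ennreal" where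
  "M_s X f \<alpha> K s \<epsilon> \<phi> = lim (\<lambda>n. M_n X f \<alpha> K s \<epsilon> n \<phi>)"

definition M_crit :: "'a::metric_space set \<Rightarrow> ('a \<Rightarrow> 'a) \<Rightarrow> real \<Rightarrow> 'a set \<Rightarrow> real
    \<Rightarrow> ('a \<Rightarrow> real) \<Rightarrow> ereal" where
  "M_crit X f \<alpha> K \<epsilon> \<phi> = Inf {ereal s | s. M_s X f \<alpha> K s \<epsilon> \<phi> = 0}"

definition dim_BS :: "'a::metric_space set \<Rightarrow> ('a \<Rightarrow> 'a) \<Rightarrow> real \<Rightarrow> 'a set \<Rightarrow> ('a \<Rightarrow> real) \<Rightarrow> ereal" where
  "dim_BS X f \<alpha> K \<phi> = Lim (at_right 0) (\<lambda>\<epsilon>. M_crit X f \<alpha> K \<epsilon> \<phi>)"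

text \<open>Pointwise alpha-local Brin-Katok entropy; -log 0 is read as +infinity.\<close>
definition local_BK :: "'a::metric_space set \<Rightarrow> ('a \<Rightarrow> 'a) \<Rightarrow> 'a measure \<Rightarrow> real \<Rightarrow> ('a \<Rightarrow> real)
    \<Rightarrow> 'a \<Rightarrow> ereal" where
  "local_BK X f \<mu> \<alpha> \<phi> x = Lim (at_right 0) (\<lambda>\<epsilon>.
     liminf (\<lambda>n. if measure \<mu> (bowen_ball X f \<alpha> n x \<epsilon>) = 0 then \<infinity>
                 else ereal (- ln (measure \<mu> (bowen_ball X f \<alpha> n x \<epsilon>)) / birkhoff f \<phi> n x)))"

end

theory Submission
  imports Defs
begin

text \<open>Both inequalities compare the sums defining the dimension with the \<open>\<mu>\<close>-masses of Bowen
  balls. Upper bound: every \<open>x \<in> K\<close> has arbitrarily long times \<open>n\<close> at which the ball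
  \<open>B\<^sub>n(x,\<epsilon>)\<close> is heavy, i.e. has mass above \<open>exp (-(s+\<delta>) S\<^sub>n\<phi>(x))\<close>. Selecting level by level
  in \<open>n\<close>, as in Vitali's covering lemma, gives a disjoint family of heavy balls whose doubled
  balls still cover \<open>K\<close>. Disjointness bounds their total mass by 1, so the sum with exponent
  \<open>s + 2\<delta>\<close> is at most \<open>exp (-\<delta> N min \<phi>)\<close>, which tends to 0.
  Lower bound: as \<open>\<mu>(K) > 0\<close>, some set of positive outer measure has uniformly light balls,
  \<open>\<mu>(B\<^sub>n(x,r)) \<le> exp (-t S\<^sub>n\<phi>(x))\<close> for all \<open>n \<ge> N\<close>. Any ball of radius \<open>\<epsilon> \<le> r/2\<close> meeting this
  set lies in such a light ball, and on it \<open>S\<^sub>n\<phi>\<close> is nearly constant by uniform continuity of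
  \<open>\<phi>\<close>. Hence every cover has sum at least the outer measure of the set (mass distribution
  principle).\<close>

section \<open>Bowen balls and Birkhoff sums\<close>

lemma funpow_mem:
  assumes "f ` X \<subseteq> X" "x \<in> X"
  shows "(f ^^ i) x \<in> X"
  using assms by (induction i) auto

lemma continuous_on_funpow:
  assumes "continuous_on X f" "f ` X \<subseteq> X"
  shows "continuous_on X (f ^^ i)"
proof (induction i)
  case (Suc i)
  have "continuous_on X (f \<circ> (f ^^ i))"
    using Suc assms by (intro continuous_on_compose) (auto intro: continuous_on_subset funpow_mem)
  then show ?case by simp
qed simp

lemma mem_bowen_ball_iff:
  assumes "0 < n"
  shows "y \<in> bowen_ball X f \<alpha> n x \<epsilon> \<longleftrightarrow>
    y \<in> X \<and> (\<forall>i<n. exp (\<alpha> * real i) * dist ((f ^^ i) x) ((f ^^ i) y) < \<epsilon>)"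
proof -
  have "finite ((\<lambda>i. exp (\<alpha> * real i) * dist ((f ^^ i) x) ((f ^^ i) y)) ` {..<n})"
    and "(\<lambda>i. exp (\<alpha> * real i) * dist ((f ^^ i) x) ((f ^^ i) y)) ` {..<n} \<noteq> {}"
    using assms by auto
  then show ?thesis by (simp add: bowen_ball_def dn_alpha_def Max_less_iff) blast
qed

lemma bowen_ball_subset: "bowen_ball X f \<alpha> n x \<epsilon> \<subseteq> X"
  by (auto simp: bowen_ball_def)

lemma bowen_ball_mono: "\<epsilon> \<le> \<epsilon>' \<Longrightarrow> bowen_ball X f \<alpha> n x \<epsilon> \<subseteq> bowen_ball X f \<alpha> n x \<epsilon>'"
  by (auto simp: bowen_ball_def)

lemma bowen_ball_antimono_length:
  assumes "0 < m" "m \<le> n"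
  shows "bowen_ball X f \<alpha> n x \<epsilon> \<subseteq> bowen_ball X f \<alpha> m x \<epsilon>"
  using assms by (simp add: subset_iff mem_bowen_ball_iff)

lemma centre_mem_bowen_ball: "0 < n \<Longrightarrow> x \<in> X \<Longrightarrow> 0 < \<epsilon> \<Longrightarrow> x \<in> bowen_ball X f \<alpha> n x \<epsilon>"
  by (simp add: mem_bowen_ball_iff)

lemma bowen_ball_commute:
  "0 < n \<Longrightarrow> x \<in> X \<Longrightarrow> y \<in> bowen_ball X f \<alpha> n x \<epsilon> \<Longrightarrow> x \<in> bowen_ball X f \<alpha> n y \<epsilon>"
  by (simp add: mem_bowen_ball_iff dist_commute)

lemma bowen_ball_triangle:
  assumes "0 < n" "x \<in> bowen_ball X f \<alpha> n z \<delta>" "y \<in> bowen_ball X f \<alpha> n z \<epsilon>"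
  shows "y \<in> bowen_ball X f \<alpha> n x (\<delta> + \<epsilon>)"
proof -
  have "exp (\<alpha> * real i) * dist ((f ^^ i) x) ((f ^^ i) y) < \<delta> + \<epsilon>" if "i < n" for i
  proof -
    have "dist ((f ^^ i) x) ((f ^^ i) y) \<le> dist ((f ^^ i) z) ((f ^^ i) x) + dist ((f ^^ i) z) ((f ^^ i) y)"
      by (rule dist_triangle3)
    then have "exp (\<alpha> * real i) * dist ((f ^^ i) x) ((f ^^ i) y) \<le>
        exp (\<alpha> * real i) * dist ((f ^^ i) z) ((f ^^ i) x) + exp (\<alpha> * real i) * dist ((f ^^ i) z) ((f ^^ i) y)"
      by (simp add: distrib_left[symmetric])
    moreover have "exp (\<alpha> * real i) * dist ((f ^^ i) z) ((f ^^ i) x) < \<delta>"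
      and "exp (\<alpha> * real i) * dist ((f ^^ i) z) ((f ^^ i) y) < \<epsilon>"
      using assms that by (simp_all add: mem_bowen_ball_iff)
    ultimately show ?thesis by linarith
  qed
  with assms show ?thesis by (simp add: mem_bowen_ball_iff)
qed

lemma dist_funpow_less_of_mem_bowen_ball:
  assumes "0 \<le> \<alpha>" "0 < n" "y \<in> bowen_ball X f \<alpha> n x \<epsilon>" "i < n"
  shows "dist ((f ^^ i) x) ((f ^^ i) y) < \<epsilon>"
proof -
  have "dist ((f ^^ i) x) ((f ^^ i) y) \<le> exp (\<alpha> * real i) * dist ((f ^^ i) x) ((f ^^ i) y)"
    using assms(1) by (intro mult_le_cancel_right1[THEN iffD2]) auto
  also have "\<dots> < \<epsilon>" using assms(2-4) by (simp add: mem_bowen_ball_iff)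
  finally show ?thesis .
qed

lemma sets_bowen_ball:
  assumes "continuous_on X f" "f ` X \<subseteq> X" "sets M = sets (restrict_space borel X)"
  shows "bowen_ball X f \<alpha> n x \<epsilon> \<in> sets M"
proof -
  let ?R = "restrict_space borel X"
  have "(\<lambda>y. exp (\<alpha> * real i) * dist ((f ^^ i) x) ((f ^^ i) y)) \<in> borel_measurable ?R" for i
    by (intro borel_measurable_continuous_on_restrict continuous_intros continuous_on_funpow assms(1,2))
  then have "dn_alpha f \<alpha> n x \<in> borel_measurable ?R"
    unfolding dn_alpha_def[abs_def] by (intro borel_measurable_Max) auto
  then have "dn_alpha f \<alpha> n x -` {..<\<epsilon>} \<inter> space ?R \<in> sets ?R"
    by (rule measurable_sets) simp
  moreover have "dn_alpha f \<alpha> n x -` {..<\<epsilon>} \<inter> space ?R = bowen_ball X f \<alpha> n x \<epsilon>"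
    by (auto simp: bowen_ball_def space_restrict_space)
  ultimately show ?thesis using assms(3) by simp
qed

lemma birkhoff_ge:
  assumes "f ` X \<subseteq> X" "x \<in> X" "\<forall>y\<in>X. c \<le> \<phi> y"
  shows "real n * c \<le> birkhoff f \<phi> n x"
  using sum_bounded_below[of "{..<n}" c "\<lambda>j. \<phi> ((f ^^ j) x)"] assms
  by (simp add: birkhoff_def funpow_mem)

lemma birkhoff_le:
  assumes "f ` X \<subseteq> X" "x \<in> X" "\<forall>y\<in>X. \<phi> y \<le> C"
  shows "birkhoff f \<phi> n x \<le> real n * C"
  using sum_bounded_above[of "{..<n}" "\<lambda>j. \<phi> ((f ^^ j) x)" C] assms
  by (simp add: birkhoff_def funpow_mem)

lemma birkhoff_le_of_orbits_close:
  assumes "f ` X \<subseteq> X" "x \<in> X" "y \<in> X" "\<forall>j<n. dist ((f ^^ j) x) ((f ^^ j) y) < r"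
    and "\<forall>u\<in>X. \<forall>v\<in>X. dist u v < r \<longrightarrow> \<bar>\<phi> u - \<phi> v\<bar> \<le> \<eta>"
  shows "birkhoff f \<phi> n y \<le> birkhoff f \<phi> n x + real n * \<eta>"
proof -
  have "\<phi> ((f ^^ j) y) \<le> \<phi> ((f ^^ j) x) + \<eta>" if "j < n" for j
  proof -
    have "\<bar>\<phi> ((f ^^ j) x) - \<phi> ((f ^^ j) y)\<bar> \<le> \<eta>"
      using assms(2-5) that by (simp add: funpow_mem[OF assms(1)])
    then show ?thesis by linarith
  qed
  then have "(\<Sum>j<n. \<phi> ((f ^^ j) y)) \<le> (\<Sum>j<n. \<phi> ((f ^^ j) x) + \<eta>)"
    by (intro sum_mono) simp
  then show ?thesis by (simp add: birkhoff_def sum.distrib)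
qed

lemma bowen_ball_subset_double:
  assumes "0 < n" "x \<in> bowen_ball X f \<alpha> n y \<epsilon>"
  shows "bowen_ball X f \<alpha> n y \<epsilon> \<subseteq> bowen_ball X f \<alpha> n x (2 * \<epsilon>)"
proof
  fix z assume "z \<in> bowen_ball X f \<alpha> n y \<epsilon>"
  with assms have "z \<in> bowen_ball X f \<alpha> n x (\<epsilon> + \<epsilon>)"
    by (intro bowen_ball_triangle)
  then show "z \<in> bowen_ball X f \<alpha> n x (2 * \<epsilon>)" by (simp only: mult_2)
qed

lemma mem_bowen_ball_of_overlap:
  assumes "0 < m" "m \<le> n" "x \<in> X" "y \<in> X"
    and "z \<in> bowen_ball X f \<alpha> n x \<epsilon>" "z \<in> bowen_ball X f \<alpha> m y \<epsilon>"
  shows "x \<in> bowen_ball X f \<alpha> m y (2 * \<epsilon>)"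
proof -
  have "z \<in> bowen_ball X f \<alpha> m x \<epsilon>"
    using assms(1,2,5) bowen_ball_antimono_length by blast
  with assms(1,3) have "x \<in> bowen_ball X f \<alpha> m z \<epsilon>"
    by (rule bowen_ball_commute)
  moreover have "bowen_ball X f \<alpha> m z \<epsilon> \<subseteq> bowen_ball X f \<alpha> m y (2 * \<epsilon>)"
    using bowen_ball_subset_double[OF assms(1) bowen_ball_commute[OF assms(1,4,6)]] .
  ultimately show ?thesis by blast
qed

lemma subset_UN_double_bowen_balls:
  assumes "K \<subseteq> X" "Y \<subseteq> X" "\<And>y. y \<in> Y \<Longrightarrow> 0 < m y"
    and "\<And>x. x \<in> K \<Longrightarrow> \<exists>y\<in>Y. m y \<le> m x \<and>
      bowen_ball X f \<alpha> (m x) x \<epsilon> \<inter> bowen_ball X f \<alpha> (m y) y \<epsilon> \<noteq> {}"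
  shows "K \<subseteq> (\<Union>y\<in>Y. bowen_ball X f \<alpha> (m y) y (2 * \<epsilon>))"
proof
  fix x assume x: "x \<in> K"
  with assms(4) obtain y w where y: "y \<in> Y" "m y \<le> m x"
    and w: "w \<in> bowen_ball X f \<alpha> (m x) x \<epsilon>" "w \<in> bowen_ball X f \<alpha> (m y) y \<epsilon>"
    by blast
  have "x \<in> bowen_ball X f \<alpha> (m y) y (2 * \<epsilon>)"
    using assms(1-3) x y by (intro mem_bowen_ball_of_overlap[OF _ y(2) _ _ w]) auto
  with y(1) show "x \<in> (\<Union>y\<in>Y. bowen_ball X f \<alpha> (m y) y (2 * \<epsilon>))" by blast
qed

text \<open>In applications \<open>\<sigma>\<close> is the supremum of \<open>S\<^sub>m\<phi>\<close> over a Bowen ball and \<open>S\<close> its value at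
  one point of the ball.\<close>

lemma weighted_exponent_le:
  fixes c \<eta> s t \<sigma> S :: real
  assumes "0 \<le> t" "0 < c" "0 \<le> \<eta>" "real m * c \<le> \<sigma>" "\<sigma> \<le> S + real m * \<eta>" "s \<le> t * (1 - \<eta> / c)"
  shows "s * \<sigma> \<le> t * S"
proof -
  have "0 \<le> \<sigma>" using assms(2,4) by (smt (verit) mult_nonneg_nonneg of_nat_0_le_iff)
  have "real m * c * (\<eta> / c) \<le> \<sigma> * (\<eta> / c)"
    using assms(2-4) by (intro mult_right_mono) simp_all
  then have "real m * \<eta> \<le> \<sigma> * \<eta> / c"
    using assms(2) by simp
  with assms(5) have "\<sigma> * (1 - \<eta> / c) \<le> S"
    by (simp add: algebra_simps)
  with assms(1) have "t * (\<sigma> * (1 - \<eta> / c)) \<le> t * S"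
    by (rule mult_left_mono[rotated])
  moreover have "s * \<sigma> \<le> t * (1 - \<eta> / c) * \<sigma>"
    using assms(6) \<open>0 \<le> \<sigma>\<close> by (rule mult_right_mono)
  ultimately show ?thesis by (simp add: mult_ac)
qed

section \<open>Disjoint subfamilies and countable covers\<close>

lemma emeasure_UN_le_nn_integral_count_space:
  fixes E :: "nat \<Rightarrow> 'a set"
  assumes "\<And>i. i \<in> I \<Longrightarrow> E i \<in> sets M"
  shows "emeasure M (\<Union>i\<in>I. E i) \<le> (\<integral>\<^sup>+ i. emeasure M (E i) \<partial>count_space I)"
proof -
  let ?F = "\<lambda>i. if i \<in> I then E i else {}"
  have "emeasure M (\<Union>i\<in>I. E i) = emeasure M (\<Union>i. ?F i)"
    by (intro arg_cong[where f = "emeasure M"]) auto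
  also have "\<dots> \<le> (\<Sum>i. emeasure M (?F i))"
    using assms by (intro emeasure_subadditive_countably) auto
  also have "\<dots> = (\<integral>\<^sup>+ i. emeasure M (?F i) \<partial>count_space UNIV)"
    by (rule nn_integral_count_space_nat[symmetric])
  also have "\<dots> = (\<integral>\<^sup>+ i. emeasure M (E i) \<partial>count_space I)"
    by (subst nn_integral_count_space_indicator) (auto intro!: nn_integral_cong split: split_indicator)
  finally show ?thesis .
qed

lemma (in finite_measure) measure_lower_bound_of_not_null:
  assumes "\<not> (\<exists>N\<in>null_sets M. A \<subseteq> N)"
  obtains c where "0 < c" "\<And>B. B \<in> sets M \<Longrightarrow> A \<subseteq> B \<Longrightarrow> c \<le> measure M B"
proof (rule ccontr)
  assume "\<not> thesis"
  with that have "\<exists>B\<in>sets M. A \<subseteq> B \<and> measure M B < inverse (real (Suc k))" for k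
    by (meson inverse_positive_iff_positive of_nat_0_less_iff zero_less_Suc not_le)
  then obtain B where B: "\<And>k. B k \<in> sets M" "\<And>k. A \<subseteq> B k"
      "\<And>k. measure M (B k) < inverse (real (Suc k))"
    by metis
  have "measure M (\<Inter>k. B k) \<le> 0"
  proof (rule ccontr)
    assume "\<not> measure M (\<Inter>k. B k) \<le> 0"
    then obtain k where "inverse (real (Suc k)) < measure M (\<Inter>k. B k)"
      using reals_Archimedean by (metis not_le)
    moreover have "measure M (\<Inter>k. B k) \<le> measure M (B k)"
      using B(1) by (intro finite_measure_mono) auto
    ultimately show False using B(3)[of k] by linarith
  qed
  then have "(\<Inter>k. B k) \<in> null_sets M"
    using B(1) by (auto simp: emeasure_eq_measure null_sets_def intro: measure_nonneg antisym)
  with B(2) assms show False by blast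
qed

lemma (in prob_space) card_disjoint_family_le:
  assumes "finite F" "disjoint_family_on B F" "\<And>x. x \<in> F \<Longrightarrow> B x \<in> events"
    and "\<And>x. x \<in> F \<Longrightarrow> c < prob (B x)"
  shows "real (card F) * c \<le> 1"
proof -
  have "real (card F) * c = (\<Sum>x\<in>F. c)" by simp
  also have "\<dots> \<le> (\<Sum>x\<in>F. prob (B x))"
    using assms(4) by (intro sum_mono less_imp_le)
  also have "\<dots> = prob (\<Union>x\<in>F. B x)"
    using assms(1-3) by (intro finite_measure_finite_Union[symmetric]) auto
  also have "\<dots> \<le> 1" by (rule prob_le_1)
  finally show ?thesis .
qed

lemma maximal_disjoint_subfamily:
  assumes bound: "\<And>F. F \<subseteq> C \<Longrightarrow> finite F \<Longrightarrow> disjoint_family_on B F \<Longrightarrow> card F \<le> b"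
    and nonempty: "\<And>x. x \<in> C \<Longrightarrow> B x \<noteq> {}"
  obtains F where "F \<subseteq> C" "finite F" "disjoint_family_on B F"
    "\<And>x. x \<in> C \<Longrightarrow> \<exists>y\<in>F. B x \<inter> B y \<noteq> {}"
proof -
  let ?admissible = "\<lambda>F. F \<subseteq> C \<and> finite F \<and> disjoint_family_on B F"
  obtain F where F: "?admissible F" and largest: "\<And>F'. ?admissible F' \<Longrightarrow> card F' \<le> card F"
  proof -
    have "?admissible {}" by (simp add: disjoint_family_on_def)
    moreover have "\<forall>F. ?admissible F \<longrightarrow> card F < Suc b"
      using bound by (simp add: less_Suc_eq_le)
    ultimately show thesis
      using that ex_has_greatest_nat[of ?admissible "{}" card "Suc b"] by blast
  qed
  have "\<exists>y\<in>F. B x \<inter> B y \<noteq> {}" if x: "x \<in> C" for x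
  proof (cases "x \<in> F")
    case True
    with nonempty x show ?thesis by blast
  next
    case False
    with F have "card F < card (insert x F)" by simp
    with largest[of "insert x F"] F x have "\<not> disjoint_family_on B (insert x F)"
      by (meson finite_insert insert_subset not_le)
    with F False show ?thesis by (simp add: disjoint_family_on_insert) blast
  qed
  with F that show thesis by blast
qed

lemma disjoint_subfamily_add_level:
  fixes lev :: "'a \<Rightarrow> nat"
  assumes bound: "\<And>F. F \<subseteq> {x\<in>K. lev x = k} \<Longrightarrow> finite F \<Longrightarrow> disjoint_family_on B F \<Longrightarrow> card F \<le> b"
    and nonempty: "\<And>x. x \<in> K \<Longrightarrow> B x \<noteq> {}"
    and A: "A \<subseteq> K" "finite A" "disjoint_family_on B A" "\<forall>y\<in>A. lev y < k"
      "\<forall>x\<in>K. lev x < k \<longrightarrow> (\<exists>y\<in>A. lev y \<le> lev x \<and> B x \<inter> B y \<noteq> {})"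
  obtains A' where "A \<subseteq> A'" "A' \<subseteq> K" "finite A'" "disjoint_family_on B A'" "\<forall>y\<in>A'. lev y < Suc k"
    "\<forall>x\<in>K. lev x < Suc k \<longrightarrow> (\<exists>y\<in>A'. lev y \<le> lev x \<and> B x \<inter> B y \<noteq> {})"
proof -
  define C where "C = {x\<in>K. lev x = k \<and> (\<forall>y\<in>A. B x \<inter> B y = {})}"
  obtain F where F: "F \<subseteq> C" "finite F" "disjoint_family_on B F"
    "\<And>x. x \<in> C \<Longrightarrow> \<exists>y\<in>F. B x \<inter> B y \<noteq> {}"
  proof (rule maximal_disjoint_subfamily)
    show "card F \<le> b" if "F \<subseteq> C" "finite F" "disjoint_family_on B F" for F
      using bound[of F] that by (auto simp: C_def)
    show "B x \<noteq> {}" if "x \<in> C" for x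
      using nonempty that by (simp add: C_def)
  qed blast
  have F_C: "y \<in> K" "lev y = k" "\<And>z. z \<in> A \<Longrightarrow> B y \<inter> B z = {}" if "y \<in> F" for y
    using F(1) that unfolding C_def by blast+
  have disjoint: "disjoint_family_on B (A \<union> F)"
    using A(3) F(3) F_C(3) unfolding disjoint_family_on_def by (metis Int_commute Un_iff)
  have cover: "\<forall>x\<in>K. lev x < Suc k \<longrightarrow> (\<exists>y\<in>A \<union> F. lev y \<le> lev x \<and> B x \<inter> B y \<noteq> {})"
  proof (intro ballI impI)
    fix x assume x: "x \<in> K" "lev x < Suc k"
    show "\<exists>y\<in>A \<union> F. lev y \<le> lev x \<and> B x \<inter> B y \<noteq> {}"
    proof (cases "lev x < k")
      case True
      with A(5) x(1) show ?thesis by (meson UnI1)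
    next
      case False
      with x have "lev x = k" by simp
      show ?thesis
      proof (cases "x \<in> C")
        case True
        then obtain y where "y \<in> F" "B x \<inter> B y \<noteq> {}" using F(4) by blast
        with F_C(2) \<open>lev x = k\<close> show ?thesis by (metis UnI2 order_refl)
      next
        case False
        with x(1) \<open>lev x = k\<close> obtain y where "y \<in> A" "B x \<inter> B y \<noteq> {}"
          unfolding C_def by blast
        with A(4) \<open>lev x = k\<close> show ?thesis by (meson UnI1 less_imp_le)
      qed
    qed
  qed
  have levels: "\<forall>y\<in>A \<union> F. lev y < Suc k"
    using A(4) F_C(2) by (metis Un_iff less_Suc_eq)
  have "A \<union> F \<subseteq> K"
    using A(1) F_C(1) by blast
  from Un_upper1 this _ disjoint levels cover show thesis
    by (rule that) (simp add: A(2) F(2))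
qed

text \<open>A Vitali-type selection: levels are processed in increasing order, each time adding a
  maximal disjoint family of sets of the current level that avoid everything chosen so far.\<close>

lemma disjoint_subfamily_by_levels:
  fixes lev :: "'a \<Rightarrow> nat"
  assumes bound: "\<And>k F. F \<subseteq> {x\<in>K. lev x = k} \<Longrightarrow> finite F \<Longrightarrow> disjoint_family_on B F \<Longrightarrow> card F \<le> b k"
    and nonempty: "\<And>x. x \<in> K \<Longrightarrow> B x \<noteq> {}"
  obtains Y where "Y \<subseteq> K" "countable Y" "disjoint_family_on B Y"
    "\<And>x. x \<in> K \<Longrightarrow> \<exists>y\<in>Y. lev y \<le> lev x \<and> B x \<inter> B y \<noteq> {}"
proof -
  define inv where "inv k A \<longleftrightarrow> A \<subseteq> K \<and> finite A \<and> disjoint_family_on B A \<and> (\<forall>y\<in>A. lev y < k) \<and>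
    (\<forall>x\<in>K. lev x < k \<longrightarrow> (\<exists>y\<in>A. lev y \<le> lev x \<and> B x \<inter> B y \<noteq> {}))" for k A
  have step: "\<exists>A'. A \<subseteq> A' \<and> inv (Suc k) A'" if "inv k A" for k A
  proof -
    from that have "A \<subseteq> K" "finite A" "disjoint_family_on B A" "\<forall>y\<in>A. lev y < k"
      "\<forall>x\<in>K. lev x < k \<longrightarrow> (\<exists>y\<in>A. lev y \<le> lev x \<and> B x \<inter> B y \<noteq> {})"
      unfolding inv_def by simp_all
    from disjoint_subfamily_add_level[OF bound[of _ k] nonempty this]
    obtain A' where "A \<subseteq> A'" "A' \<subseteq> K" "finite A'" "disjoint_family_on B A'" "\<forall>y\<in>A'. lev y < Suc k"
      "\<forall>x\<in>K. lev x < Suc k \<longrightarrow> (\<exists>y\<in>A'. lev y \<le> lev x \<and> B x \<inter> B y \<noteq> {})" .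
    then show ?thesis unfolding inv_def by blast
  qed
  define acc where "acc = rec_nat {} (\<lambda>k A. SOME A'. A \<subseteq> A' \<and> inv (Suc k) A')"
  have acc_Suc: "acc (Suc k) = (SOME A'. acc k \<subseteq> A' \<and> inv (Suc k) A')" for k
    by (simp add: acc_def)
  have inv_acc: "inv k (acc k)" for k
  proof (induction k)
    case 0
    show ?case by (simp add: acc_def inv_def disjoint_family_on_def)
  next
    case (Suc k)
    from step[OF Suc.IH] have "acc k \<subseteq> acc (Suc k) \<and> inv (Suc k) (acc (Suc k))"
      unfolding acc_Suc by (rule someI_ex)
    then show ?case ..
  qed
  have "acc k \<subseteq> acc (Suc k)" for k
    using someI_ex[OF step[OF inv_acc[of k]]] unfolding acc_Suc by blast
  then have acc_mono: "acc k \<subseteq> acc l" if "k \<le> l" for k l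
    using lift_Suc_mono_le[of acc, OF _ that] by blast
  show thesis
  proof
    show "(\<Union>k. acc k) \<subseteq> K" "countable (\<Union>k. acc k)"
      using inv_acc by (simp_all add: inv_def UN_least countable_finite)
    show "disjoint_family_on B (\<Union>k. acc k)"
      unfolding disjoint_family_on_def
    proof clarify
      fix y y' k l assume "y \<in> acc k" "y' \<in> acc l" "y \<noteq> y'"
      with acc_mono[of k "max k l"] acc_mono[of l "max k l"]
      have "y \<in> acc (max k l)" "y' \<in> acc (max k l)" "y \<noteq> y'" by auto
      with inv_acc[of "max k l"] show "B y \<inter> B y' = {}"
        unfolding inv_def disjoint_family_on_def by blast
    qed
    show "\<exists>y\<in>(\<Union>k. acc k). lev y \<le> lev x \<and> B x \<inter> B y \<noteq> {}" if "x \<in> K" for x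
      using inv_acc[of "Suc (lev x)"] that unfolding inv_def by blast
  qed
qed

section \<open>The Caratheodory-type sums\<close>

definition bowen_covers :: "'a::metric_space set \<Rightarrow> ('a \<Rightarrow> 'a) \<Rightarrow> real \<Rightarrow> 'a set \<Rightarrow> real \<Rightarrow> nat
    \<Rightarrow> (nat set \<times> (nat \<Rightarrow> 'a) \<times> (nat \<Rightarrow> nat)) set" where
  "bowen_covers X f \<alpha> K \<epsilon> n = {(I, c, m) | I c m.
     (\<forall>i\<in>I. c i \<in> X \<and> n \<le> m i) \<and> K \<subseteq> (\<Union>i\<in>I. bowen_ball X f \<alpha> (m i) (c i) \<epsilon>)}"

definition ball_sup_birkhoff :: "'a::metric_space set \<Rightarrow> ('a \<Rightarrow> 'a) \<Rightarrow> real \<Rightarrow> ('a \<Rightarrow> real) \<Rightarrow> nat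
    \<Rightarrow> 'a \<Rightarrow> real \<Rightarrow> real" where
  "ball_sup_birkhoff X f \<alpha> \<phi> n x \<epsilon> = (SUP y\<in>bowen_ball X f \<alpha> n x \<epsilon>. birkhoff f \<phi> n y)"

lemma mem_bowen_covers:
  "(I, c, m) \<in> bowen_covers X f \<alpha> K \<epsilon> n \<longleftrightarrow>
    (\<forall>i\<in>I. c i \<in> X \<and> n \<le> m i) \<and> K \<subseteq> (\<Union>i\<in>I. bowen_ball X f \<alpha> (m i) (c i) \<epsilon>)"
  by (simp add: bowen_covers_def)

lemma ball_sup_birkhoff_le:
  assumes "0 < m" "x \<in> X" "0 < \<epsilon>" "\<And>y. y \<in> bowen_ball X f \<alpha> m x \<epsilon> \<Longrightarrow> birkhoff f \<phi> m y \<le> b"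
  shows "ball_sup_birkhoff X f \<alpha> \<phi> m x \<epsilon> \<le> b"
  unfolding ball_sup_birkhoff_def using assms centre_mem_bowen_ball by (intro cSUP_least) blast+

lemma M_n_eq_INF_bowen_covers:
  "M_n X f \<alpha> K s \<epsilon> n \<phi> = (INF (I, c, m)\<in>bowen_covers X f \<alpha> K \<epsilon> n.
     \<integral>\<^sup>+ i. ennreal (exp (- s * ball_sup_birkhoff X f \<alpha> \<phi> (m i) (c i) \<epsilon>)) \<partial>count_space I)"
  unfolding M_n_def bowen_covers_def ball_sup_birkhoff_def ..

lemma M_n_le_cover_sum:
  assumes "(I, c, m) \<in> bowen_covers X f \<alpha> K \<epsilon> n"
  shows "M_n X f \<alpha> K s \<epsilon> n \<phi> \<le>
    (\<integral>\<^sup>+ i. ennreal (exp (- s * ball_sup_birkhoff X f \<alpha> \<phi> (m i) (c i) \<epsilon>)) \<partial>count_space I)"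
  unfolding M_n_eq_INF_bowen_covers using assms by (rule INF_lower2) simp

lemma M_n_le_countable_cover_sum:
  assumes "countable Y" "Y \<subseteq> X" "\<And>y. y \<in> Y \<Longrightarrow> n \<le> m y"
    and "K \<subseteq> (\<Union>y\<in>Y. bowen_ball X f \<alpha> (m y) y \<epsilon>)"
  shows "M_n X f \<alpha> K s \<epsilon> n \<phi> \<le>
    (\<integral>\<^sup>+ y. ennreal (exp (- s * ball_sup_birkhoff X f \<alpha> \<phi> (m y) y \<epsilon>)) \<partial>count_space Y)"
proof -
  let ?c = "from_nat_into Y"
  have "(to_nat_on Y ` Y, ?c, m \<circ> ?c) \<in> bowen_covers X f \<alpha> K \<epsilon> n"
    using assms by (auto simp: mem_bowen_covers)
  then have "M_n X f \<alpha> K s \<epsilon> n \<phi> \<le> (\<integral>\<^sup>+ i. ennreal (exp (- s *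
      ball_sup_birkhoff X f \<alpha> \<phi> (m (?c i)) (?c i) \<epsilon>)) \<partial>count_space (to_nat_on Y ` Y))"
    by (auto dest: M_n_le_cover_sum)
  also have "\<dots> = (\<integral>\<^sup>+ y. ennreal (exp (- s *
      ball_sup_birkhoff X f \<alpha> \<phi> (m (?c (to_nat_on Y y))) (?c (to_nat_on Y y)) \<epsilon>)) \<partial>count_space Y)"
    using assms(1) by (intro nn_integral_bij_count_space[symmetric]) (simp add: bij_betw_def inj_on_to_nat_on)
  also have "\<dots> = (\<integral>\<^sup>+ y. ennreal (exp (- s * ball_sup_birkhoff X f \<alpha> \<phi> (m y) y \<epsilon>)) \<partial>count_space Y)"
    using assms(1) by (intro nn_integral_cong) simp
  finally show ?thesis .
qed

lemma M_n_empty: "M_n X f \<alpha> {} s \<epsilon> n \<phi> = 0"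
  using M_n_le_cover_sum[of "{}" "\<lambda>_. undefined" "\<lambda>_. 0" X f \<alpha> "{}" \<epsilon> n s \<phi>]
  by (simp add: mem_bowen_covers)

lemma incseq_M_n: "incseq (\<lambda>n. M_n X f \<alpha> K s \<epsilon> n \<phi>)"
proof (rule incseq_SucI)
  fix n
  have "bowen_covers X f \<alpha> K \<epsilon> (Suc n) \<subseteq> bowen_covers X f \<alpha> K \<epsilon> n"
    unfolding bowen_covers_def by (blast dest: Suc_leD)
  then show "M_n X f \<alpha> K s \<epsilon> n \<phi> \<le> M_n X f \<alpha> K s \<epsilon> (Suc n) \<phi>"
    unfolding M_n_eq_INF_bowen_covers by (rule INF_superset_mono) simp
qed

lemma M_s_eq_SUP: "M_s X f \<alpha> K s \<epsilon> \<phi> = (SUP n. M_n X f \<alpha> K s \<epsilon> n \<phi>)"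
  unfolding M_s_def by (rule limI[OF LIMSEQ_SUP[OF incseq_M_n]])

lemma M_n_tendsto_M_s: "(\<lambda>n. M_n X f \<alpha> K s \<epsilon> n \<phi>) \<longlonglongrightarrow> M_s X f \<alpha> K s \<epsilon> \<phi>"
  unfolding M_s_eq_SUP by (rule LIMSEQ_SUP[OF incseq_M_n])

lemma M_n_le_M_s: "M_n X f \<alpha> K s \<epsilon> n \<phi> \<le> M_s X f \<alpha> K s \<epsilon> \<phi>"
  unfolding M_s_eq_SUP by (rule SUP_upper) simp

lemma M_crit_le: "M_s X f \<alpha> K s \<epsilon> \<phi> = 0 \<Longrightarrow> M_crit X f \<alpha> K \<epsilon> \<phi> \<le> ereal s"
  unfolding M_crit_def by (rule Inf_lower) blast

lemma le_M_crit:
  assumes "\<And>s'. s' \<le> s \<Longrightarrow> M_s X f \<alpha> K s' \<epsilon> \<phi> \<noteq> 0"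
  shows "ereal s \<le> M_crit X f \<alpha> K \<epsilon> \<phi>"
  unfolding M_crit_def
proof (rule Inf_greatest, clarify)
  fix s' assume "M_s X f \<alpha> K s' \<epsilon> \<phi> = 0"
  with assms have "\<not> s' \<le> s" by blast
  then show "ereal s \<le> ereal s'" by simp
qed

lemma Lim_at_right_0_antimono:
  fixes g :: "real \<Rightarrow> ereal"
  assumes "\<And>a b. 0 < a \<Longrightarrow> a \<le> b \<Longrightarrow> g b \<le> g a"
  shows "Lim (at_right 0) g = (SUP e\<in>{0<..}. g e)"
proof (intro tendsto_Lim trivial_limit_at_right_real increasing_tendsto)
  show "\<forall>\<^sub>F e in at_right 0. g e \<le> (SUP e\<in>{0<..}. g e)"
    by (auto simp: eventually_at_right_field intro!: exI[of _ 1] SUP_upper)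
next
  fix x assume "x < (SUP e\<in>{0<..}. g e)"
  then obtain e0 where "0 < e0" "x < g e0" by (auto simp: less_SUP_iff)
  with assms show "\<forall>\<^sub>F e in at_right 0. x < g e"
    by (auto simp: eventually_at_right_field intro!: exI[of _ e0] intro: less_le_trans)
qed

locale tds_potential =
  fixes X :: "'a::metric_space set" and f :: "'a \<Rightarrow> 'a" and \<alpha> :: real and \<phi> :: "'a \<Rightarrow> real"
  assumes compact_X: "compact X"
    and continuous_f: "continuous_on X f" and f_into: "f ` X \<subseteq> X"
    and \<alpha>_nonneg: "0 \<le> \<alpha>"
    and continuous_\<phi>: "continuous_on X \<phi>" and \<phi>_pos: "\<forall>x\<in>X. 0 < \<phi> x"
begin

lemma \<phi>_bounds:
  obtains c C where "0 < c" "\<forall>y\<in>X. c \<le> \<phi> y" "\<forall>y\<in>X. \<phi> y \<le> C"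
proof (cases "X = {}")
  case True
  then show thesis by (intro that[of 1 0]) auto
next
  case False
  obtain a where "a \<in> X" "\<forall>y\<in>X. \<phi> a \<le> \<phi> y"
    using continuous_attains_inf[OF compact_X False continuous_\<phi>] by blast
  moreover obtain b where "\<forall>y\<in>X. \<phi> y \<le> \<phi> b"
    using continuous_attains_sup[OF compact_X False continuous_\<phi>] by blast
  ultimately show thesis using \<phi>_pos by (intro that[of "\<phi> a" "\<phi> b"]) auto
qed

lemma \<phi>_nonneg: "\<forall>y\<in>X. 0 \<le> \<phi> y"
  using \<phi>_pos by (simp add: less_imp_le)

lemma \<phi>_uniformly_close:
  assumes "0 < \<eta>"
  obtains d where "0 < d" "\<forall>u\<in>X. \<forall>v\<in>X. dist u v < d \<longrightarrow> \<bar>\<phi> u - \<phi> v\<bar> \<le> \<eta>"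
proof -
  obtain d where "0 < d" "\<forall>v\<in>X. \<forall>u\<in>X. dist u v < d \<longrightarrow> dist (\<phi> u) (\<phi> v) < \<eta>"
    using compact_uniformly_continuous[OF continuous_\<phi> compact_X] assms
    unfolding uniformly_continuous_on_def by metis
  then show thesis
    by (intro that[of d]) (auto simp: dist_real_def less_imp_le)
qed

lemma birkhoff_pos:
  assumes "x \<in> X" "0 < n"
  shows "0 < birkhoff f \<phi> n x"
proof -
  obtain c where "0 < c" "\<forall>y\<in>X. c \<le> \<phi> y" using \<phi>_bounds by metis
  with birkhoff_ge[OF f_into assms(1), of c \<phi> n] assms(2) show ?thesis
    by (smt (verit) mult_pos_pos of_nat_0_less_iff)
qed

lemma birkhoff_le_ball_sup_birkhoff:
  assumes "y \<in> bowen_ball X f \<alpha> m x \<epsilon>"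
  shows "birkhoff f \<phi> m y \<le> ball_sup_birkhoff X f \<alpha> \<phi> m x \<epsilon>"
proof -
  obtain C where "\<forall>y\<in>X. \<phi> y \<le> C" using \<phi>_bounds by metis
  then have "bdd_above (birkhoff f \<phi> m ` bowen_ball X f \<alpha> m x \<epsilon>)"
    using birkhoff_le[OF f_into] bowen_ball_subset by (intro bdd_aboveI2) blast
  with assms show ?thesis
    unfolding ball_sup_birkhoff_def by (rule cSUP_upper)
qed

lemma ball_sup_birkhoff_ge:
  assumes "0 < m" "x \<in> X" "0 < \<epsilon>" "\<forall>y\<in>X. c \<le> \<phi> y"
  shows "real m * c \<le> ball_sup_birkhoff X f \<alpha> \<phi> m x \<epsilon>"
  using birkhoff_ge[OF f_into assms(2,4), of m] birkhoff_le_ball_sup_birkhoff[OF centre_mem_bowen_ball[OF assms(1-3)]]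
  by linarith

lemma ball_sup_birkhoff_mono:
  assumes "0 < m" "x \<in> X" "0 < \<epsilon>" "\<epsilon> \<le> \<epsilon>'"
  shows "ball_sup_birkhoff X f \<alpha> \<phi> m x \<epsilon> \<le> ball_sup_birkhoff X f \<alpha> \<phi> m x \<epsilon>'"
  using assms
  by (intro ball_sup_birkhoff_le birkhoff_le_ball_sup_birkhoff)
    (auto intro: bowen_ball_mono[OF assms(4), THEN subsetD])

lemma M_n_antimono_radius:
  assumes "0 \<le> s" "0 < \<epsilon>" "\<epsilon> \<le> \<epsilon>'" "0 < n"
  shows "M_n X f \<alpha> K s \<epsilon>' n \<phi> \<le> M_n X f \<alpha> K s \<epsilon> n \<phi>"
  unfolding M_n_eq_INF_bowen_covers
proof (rule INF_mono, clarify)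
  fix I c m assume cover: "(I, c, m) \<in> bowen_covers X f \<alpha> K \<epsilon> n"
  then have "(I, c, m) \<in> bowen_covers X f \<alpha> K \<epsilon>' n"
    using bowen_ball_mono[OF assms(3)] by (fastforce simp: mem_bowen_covers)
  moreover have
    "(\<integral>\<^sup>+ i. ennreal (exp (- s * ball_sup_birkhoff X f \<alpha> \<phi> (m i) (c i) \<epsilon>')) \<partial>count_space I) \<le>
     (\<integral>\<^sup>+ i. ennreal (exp (- s * ball_sup_birkhoff X f \<alpha> \<phi> (m i) (c i) \<epsilon>)) \<partial>count_space I)"
  proof (intro nn_integral_mono ennreal_leI)
    fix i assume "i \<in> space (count_space I)"
    with cover assms have "ball_sup_birkhoff X f \<alpha> \<phi> (m i) (c i) \<epsilon> \<le> ball_sup_birkhoff X f \<alpha> \<phi> (m i) (c i) \<epsilon>'"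
      by (intro ball_sup_birkhoff_mono) (auto simp: mem_bowen_covers)
    with assms(1) show "exp (- s * ball_sup_birkhoff X f \<alpha> \<phi> (m i) (c i) \<epsilon>') \<le>
        exp (- s * ball_sup_birkhoff X f \<alpha> \<phi> (m i) (c i) \<epsilon>)"
      by (simp add: mult_left_mono)
  qed
  ultimately show "\<exists>G\<in>bowen_covers X f \<alpha> K \<epsilon>' n. (case G of (I, c, m) \<Rightarrow>
      \<integral>\<^sup>+ i. ennreal (exp (- s * ball_sup_birkhoff X f \<alpha> \<phi> (m i) (c i) \<epsilon>')) \<partial>count_space I) \<le>
      (\<integral>\<^sup>+ i. ennreal (exp (- s * ball_sup_birkhoff X f \<alpha> \<phi> (m i) (c i) \<epsilon>)) \<partial>count_space I)"
    by force
qed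

lemma one_le_M_n:
  assumes "K \<noteq> {}" "s \<le> 0" "0 < \<epsilon>" "0 < n"
  shows "1 \<le> M_n X f \<alpha> K s \<epsilon> n \<phi>"
  unfolding M_n_eq_INF_bowen_covers
proof (rule INF_greatest, clarify)
  fix I c m assume "(I, c, m) \<in> bowen_covers X f \<alpha> K \<epsilon> n"
  with assms(1) obtain i where i: "i \<in> I" "c i \<in> X" "n \<le> m i"
    by (auto simp: mem_bowen_covers)
  with assms \<phi>_nonneg have "real (m i) * 0 \<le> ball_sup_birkhoff X f \<alpha> \<phi> (m i) (c i) \<epsilon>"
    by (intro ball_sup_birkhoff_ge) auto
  with assms(2) have "(1::ennreal) \<le> ennreal (exp (- s * ball_sup_birkhoff X f \<alpha> \<phi> (m i) (c i) \<epsilon>))"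
    by (simp add: mult_nonpos_nonneg)
  also have "\<dots> \<le> \<integral>\<^sup>+ i. ennreal (exp (- s * ball_sup_birkhoff X f \<alpha> \<phi> (m i) (c i) \<epsilon>)) \<partial>count_space I"
    using i(1) by (rule nn_integral_ge_point)
  finally show "1 \<le> \<integral>\<^sup>+ i. ennreal (exp (- s * ball_sup_birkhoff X f \<alpha> \<phi> (m i) (c i) \<epsilon>)) \<partial>count_space I" .
qed

text \<open>For \<open>s \<le> 0\<close> the quantity \<open>M_s\<close> vanishes only on the empty set, so only \<open>s > 0\<close> matters,
  where smaller balls give larger sums.\<close>

lemma M_crit_antimono:
  assumes "0 < \<epsilon>" "\<epsilon> \<le> \<epsilon>'"
  shows "M_crit X f \<alpha> K \<epsilon>' \<phi> \<le> M_crit X f \<alpha> K \<epsilon> \<phi>"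
  unfolding M_crit_def
proof (rule Inf_superset_mono, clarify)
  fix s assume zero: "M_s X f \<alpha> K s \<epsilon> \<phi> = 0"
  have "M_s X f \<alpha> K s \<epsilon>' \<phi> = 0"
  proof (cases "K = {}")
    case True
    then show ?thesis by (simp add: M_s_eq_SUP M_n_empty)
  next
    case False
    have "\<not> s \<le> 0"
    proof
      assume "s \<le> 0"
      with False assms have "1 \<le> M_n X f \<alpha> K s \<epsilon> 1 \<phi>" by (intro one_le_M_n) auto
      also have "\<dots> \<le> M_s X f \<alpha> K s \<epsilon> \<phi>" by (rule M_n_le_M_s)
      finally show False using zero by simp
    qed
    with assms have "M_s X f \<alpha> K s \<epsilon>' \<phi> \<le> M_s X f \<alpha> K s \<epsilon> \<phi>"
      by (intro LIMSEQ_le[OF M_n_tendsto_M_s M_n_tendsto_M_s] exI[of _ 1] allI impI M_n_antimono_radius) auto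
    with zero show ?thesis by simp
  qed
  then show "\<exists>s'. ereal s = ereal s' \<and> M_s X f \<alpha> K s' \<epsilon>' \<phi> = 0" by blast
qed

lemma dim_BS_eq_SUP: "dim_BS X f \<alpha> K \<phi> = (SUP \<epsilon>\<in>{0<..}. M_crit X f \<alpha> K \<epsilon> \<phi>)"
  unfolding dim_BS_def by (rule Lim_at_right_0_antimono) (rule M_crit_antimono)

end

section \<open>Local entropy and the two bounds\<close>

lemma ereal_le_neg_ln_ratio_iff:
  fixes p S t :: real
  assumes "0 \<le> p" "0 < S"
  shows "ereal t \<le> (if p = 0 then \<infinity> else ereal (- ln p / S)) \<longleftrightarrow> p \<le> exp (- t * S)"
proof (cases "p = 0")
  case False
  with assms have "0 < p" by simp
  then have "p \<le> exp (- t * S) \<longleftrightarrow> ln p \<le> - t * S"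
    by (metis exp_le_cancel_iff exp_ln)
  with False assms(2) show ?thesis by (simp add: field_simps; linarith)
qed simp

lemma ereal_less_neg_ln_ratio_iff:
  fixes p S t :: real
  assumes "0 \<le> p" "0 < S"
  shows "ereal t < (if p = 0 then \<infinity> else ereal (- ln p / S)) \<longleftrightarrow> p < exp (- t * S)"
proof (cases "p = 0")
  case False
  with assms have "0 < p" by simp
  then have "p < exp (- t * S) \<longleftrightarrow> ln p < - t * S"
    by (metis exp_less_cancel_iff exp_ln)
  with False assms(2) show ?thesis by (simp add: field_simps; linarith)
qed simp

definition local_BK_radius :: "'a::metric_space set \<Rightarrow> ('a \<Rightarrow> 'a) \<Rightarrow> 'a measure \<Rightarrow> real \<Rightarrow> ('a \<Rightarrow> real)
    \<Rightarrow> 'a \<Rightarrow> real \<Rightarrow> ereal" where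
  "local_BK_radius X f \<mu> \<alpha> \<phi> x \<epsilon> =
     liminf (\<lambda>n. if measure \<mu> (bowen_ball X f \<alpha> n x \<epsilon>) = 0 then \<infinity>
                 else ereal (- ln (measure \<mu> (bowen_ball X f \<alpha> n x \<epsilon>)) / birkhoff f \<phi> n x))"

lemma local_BK_eq_Lim: "local_BK X f \<mu> \<alpha> \<phi> x = Lim (at_right 0) (local_BK_radius X f \<mu> \<alpha> \<phi> x)"
  unfolding local_BK_def local_BK_radius_def ..

locale tds_measure = tds_potential X f \<alpha> \<phi> + prob_space \<mu>
  for X :: "'a::metric_space set" and f \<alpha> \<phi> and \<mu> :: "'a measure" +
  assumes sets_\<mu>: "sets \<mu> = sets (restrict_space borel X)"
begin

lemma events_bowen_ball: "bowen_ball X f \<alpha> n x \<epsilon> \<in> events"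
  by (rule sets_bowen_ball[OF continuous_f f_into sets_\<mu>])

lemma events_subset: "A \<in> events \<Longrightarrow> A \<subseteq> X"
  using sets.sets_into_space[of A \<mu>] sets_eq_imp_space_eq[OF sets_\<mu>] by (simp add: space_restrict_space)

lemma local_BK_radius_antimono:
  assumes "x \<in> X" "\<epsilon> \<le> \<epsilon>'"
  shows "local_BK_radius X f \<mu> \<alpha> \<phi> x \<epsilon>' \<le> local_BK_radius X f \<mu> \<alpha> \<phi> x \<epsilon>"
  unfolding local_BK_radius_def
proof (intro Liminf_mono always_eventually allI)
  fix n
  let ?p = "prob (bowen_ball X f \<alpha> n x \<epsilon>)" and ?p' = "prob (bowen_ball X f \<alpha> n x \<epsilon>')"
  show "(if ?p' = 0 then \<infinity> else ereal (- ln ?p' / birkhoff f \<phi> n x))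
      \<le> (if ?p = 0 then \<infinity> else ereal (- ln ?p / birkhoff f \<phi> n x))"
  proof (cases "?p = 0")
    case False
    have "?p \<le> ?p'"
      using bowen_ball_mono[OF assms(2)] by (intro finite_measure_mono events_bowen_ball)
    moreover have "0 < ?p" using False measure_nonneg[of \<mu>] by (simp add: less_le)
    ultimately have "- ln ?p' \<le> - ln ?p" by simp
    moreover have "0 \<le> birkhoff f \<phi> n x"
      using birkhoff_ge[OF f_into assms(1) \<phi>_nonneg, of n] by simp
    ultimately have "- ln ?p' / birkhoff f \<phi> n x \<le> - ln ?p / birkhoff f \<phi> n x"
      by (rule divide_right_mono)
    with False \<open>0 < ?p\<close> \<open>?p \<le> ?p'\<close> show ?thesis by simp
  qed simp
qed

lemma local_BK_eq_SUP:
  "x \<in> X \<Longrightarrow> local_BK X f \<mu> \<alpha> \<phi> x = (SUP \<epsilon>\<in>{0<..}. local_BK_radius X f \<mu> \<alpha> \<phi> x \<epsilon>)"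
  unfolding local_BK_eq_Lim by (rule Lim_at_right_0_antimono) (rule local_BK_radius_antimono)

lemma eventually_prob_bowen_ball_le:
  assumes "x \<in> X" "ereal t < local_BK X f \<mu> \<alpha> \<phi> x"
  obtains \<epsilon> where "0 < \<epsilon>"
    "\<forall>\<^sub>F n in sequentially. prob (bowen_ball X f \<alpha> n x \<epsilon>) \<le> exp (- t * birkhoff f \<phi> n x)"
proof -
  obtain \<epsilon> where "0 < \<epsilon>" and less: "ereal t < local_BK_radius X f \<mu> \<alpha> \<phi> x \<epsilon>"
    using assms by (auto simp: local_BK_eq_SUP less_SUP_iff)
  from less have "\<forall>\<^sub>F n in sequentially. ereal t < (if prob (bowen_ball X f \<alpha> n x \<epsilon>) = 0 then \<infinity>
      else ereal (- ln (prob (bowen_ball X f \<alpha> n x \<epsilon>)) / birkhoff f \<phi> n x))"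
    unfolding local_BK_radius_def by (rule less_LiminfD)
  moreover have "\<forall>\<^sub>F n in sequentially. 0 < n" by (rule eventually_gt_at_top)
  ultimately have "\<forall>\<^sub>F n in sequentially. prob (bowen_ball X f \<alpha> n x \<epsilon>) \<le> exp (- t * birkhoff f \<phi> n x)"
    by eventually_elim (simp add: ereal_less_neg_ln_ratio_iff birkhoff_pos assms(1))
  with \<open>0 < \<epsilon>\<close> show thesis by (rule that)
qed

lemma frequently_prob_bowen_ball_gt:
  assumes "x \<in> X" "local_BK X f \<mu> \<alpha> \<phi> x < ereal t" "0 < \<epsilon>"
  shows "\<exists>\<^sub>F n in sequentially. exp (- t * birkhoff f \<phi> n x) < prob (bowen_ball X f \<alpha> n x \<epsilon>)"
proof (rule ccontr)
  assume "\<not> ?thesis"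
  then have "\<forall>\<^sub>F n in sequentially. prob (bowen_ball X f \<alpha> n x \<epsilon>) \<le> exp (- t * birkhoff f \<phi> n x)"
    by (simp add: not_frequently not_less)
  moreover have "\<forall>\<^sub>F n in sequentially. 0 < n" by (rule eventually_gt_at_top)
  ultimately have "\<forall>\<^sub>F n in sequentially. ereal t \<le> (if prob (bowen_ball X f \<alpha> n x \<epsilon>) = 0 then \<infinity>
      else ereal (- ln (prob (bowen_ball X f \<alpha> n x \<epsilon>)) / birkhoff f \<phi> n x))"
    by eventually_elim (simp add: ereal_le_neg_ln_ratio_iff birkhoff_pos assms(1))
  then have "ereal t \<le> local_BK_radius X f \<mu> \<alpha> \<phi> x \<epsilon>"
    unfolding local_BK_radius_def by (rule Liminf_bounded)
  also have "\<dots> \<le> local_BK X f \<mu> \<alpha> \<phi> x"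
    using assms by (auto simp: local_BK_eq_SUP intro: SUP_upper)
  finally show False using assms(2) by simp
qed

lemma disjoint_heavy_balls:
  assumes "K \<subseteq> X" "0 \<le> t" "0 < N"
    and heavy: "\<forall>x\<in>K. \<exists>\<^sub>F n in sequentially. exp (- t * birkhoff f \<phi> n x) < prob (bowen_ball X f \<alpha> n x \<epsilon>)"
  obtains Y m where "Y \<subseteq> K" "countable Y" "disjoint_family_on (\<lambda>y. bowen_ball X f \<alpha> (m y) y \<epsilon>) Y"
    "\<And>y. y \<in> Y \<Longrightarrow> N \<le> m y"
    "\<And>y. y \<in> Y \<Longrightarrow> exp (- t * birkhoff f \<phi> (m y) y) < prob (bowen_ball X f \<alpha> (m y) y \<epsilon>)"
    "K \<subseteq> (\<Union>y\<in>Y. bowen_ball X f \<alpha> (m y) y (2 * \<epsilon>))"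
proof -
  obtain C where C: "\<forall>y\<in>X. \<phi> y \<le> C" using \<phi>_bounds by metis
  define heavy_at where
    "heavy_at x n \<longleftrightarrow> N \<le> n \<and> exp (- t * birkhoff f \<phi> n x) < prob (bowen_ball X f \<alpha> n x \<epsilon>)" for x n
  define m where "m x = (SOME n. heavy_at x n)" for x
  have m: "heavy_at x (m x)" if "x \<in> K" for x
    unfolding m_def
  proof (rule someI_ex)
    from heavy that show "\<exists>n. heavy_at x n"
      unfolding heavy_at_def frequently_sequentially by blast
  qed
  define B where "B x = bowen_ball X f \<alpha> (m x) x \<epsilon>" for x
  have B_heavy: "exp (- t * (real (m x) * C)) < prob (B x)" if "x \<in> K" for x
  proof -
    have "birkhoff f \<phi> (m x) x \<le> real (m x) * C"
      using birkhoff_le[OF f_into _ C] that assms(1) by blast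
    with assms(2) have "exp (- t * (real (m x) * C)) \<le> exp (- t * birkhoff f \<phi> (m x) x)"
      by (simp add: mult_left_mono)
    also have "\<dots> < prob (B x)"
      using m[OF that] by (simp add: heavy_at_def B_def)
    finally show ?thesis .
  qed
  obtain Y where Y: "Y \<subseteq> K" "countable Y" "disjoint_family_on B Y"
    "\<And>x. x \<in> K \<Longrightarrow> \<exists>y\<in>Y. m y \<le> m x \<and> B x \<inter> B y \<noteq> {}"
  proof (rule disjoint_subfamily_by_levels)
    fix k F assume F: "F \<subseteq> {x \<in> K. m x = k}" "finite F" "disjoint_family_on B F"
    have "real (card F) * exp (- t * (real k * C)) \<le> 1"
      using F B_heavy by (intro card_disjoint_family_le) (auto simp: B_def events_bowen_ball)
    then have "real (card F) \<le> exp (t * (real k * C))"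
      by (simp add: exp_minus field_simps)
    then show "card F \<le> nat \<lfloor>exp (t * (real k * C))\<rfloor>" by (rule le_nat_floor)
  next
    fix x assume "x \<in> K"
    with B_heavy[of x] show "B x \<noteq> {}" by auto
  qed blast
  have "K \<subseteq> (\<Union>y\<in>Y. bowen_ball X f \<alpha> (m y) y (2 * \<epsilon>))"
  proof (rule subset_UN_double_bowen_balls)
    show "Y \<subseteq> X" using Y(1) assms(1) by blast
    show "0 < m y" if "y \<in> Y" for y
      using m that Y(1) assms(3) by (fastforce simp: heavy_at_def)
  qed (use assms(1) Y(4) in \<open>simp_all add: B_def\<close>)
  with Y(1,2) Y(3)[unfolded B_def[abs_def]] m show thesis
    by (intro that[of Y m]) (auto simp: heavy_at_def)
qed

lemma M_n_le_of_frequently_heavy_balls: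
  assumes "K \<subseteq> X" "0 < \<epsilon>" "0 \<le> t" "0 \<le> \<delta>" "0 < N" "0 \<le> c" "\<forall>y\<in>X. c \<le> \<phi> y"
    and heavy: "\<forall>x\<in>K. \<exists>\<^sub>F n in sequentially. exp (- t * birkhoff f \<phi> n x) < prob (bowen_ball X f \<alpha> n x \<epsilon>)"
  shows "M_n X f \<alpha> K (t + \<delta>) (2 * \<epsilon>) N \<phi> \<le> ennreal (exp (- \<delta> * c) ^ N)"
proof -
  obtain Y m where Y: "Y \<subseteq> K" "countable Y" "disjoint_family_on (\<lambda>y. bowen_ball X f \<alpha> (m y) y \<epsilon>) Y"
    and m_ge: "\<And>y. y \<in> Y \<Longrightarrow> N \<le> m y"
    and m_heavy: "\<And>y. y \<in> Y \<Longrightarrow> exp (- t * birkhoff f \<phi> (m y) y) < prob (bowen_ball X f \<alpha> (m y) y \<epsilon>)"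
    and cover: "K \<subseteq> (\<Union>y\<in>Y. bowen_ball X f \<alpha> (m y) y (2 * \<epsilon>))"
    using disjoint_heavy_balls[OF assms(1,3,5) heavy] by blast
  have Y_X: "y \<in> X" if "y \<in> Y" for y using that Y(1) assms(1) by blast
  define q where "q = exp (- \<delta> * c) ^ N"
  have term_le: "exp (- (t + \<delta>) * ball_sup_birkhoff X f \<alpha> \<phi> (m y) y (2 * \<epsilon>)) \<le>
      q * prob (bowen_ball X f \<alpha> (m y) y \<epsilon>)" if "y \<in> Y" for y
  proof -
    let ?\<sigma> = "ball_sup_birkhoff X f \<alpha> \<phi> (m y) y (2 * \<epsilon>)"
    let ?S = "birkhoff f \<phi> (m y) y"
    have pos: "0 < m y" "0 < 2 * \<epsilon>" using m_ge[OF that] assms(2,5) by auto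
    have "?S \<le> ?\<sigma>"
      using pos Y_X[OF that] by (intro birkhoff_le_ball_sup_birkhoff centre_mem_bowen_ball)
    then have "t * ?S \<le> t * ?\<sigma>" using assms(3) by (rule mult_left_mono)
    have "real N * c \<le> real (m y) * c" using m_ge[OF that] assms(6) by (simp add: mult_right_mono)
    also have "\<dots> \<le> ?\<sigma>" using pos(1) Y_X[OF that] pos(2) assms(7) by (rule ball_sup_birkhoff_ge)
    finally have "\<delta> * (real N * c) \<le> \<delta> * ?\<sigma>" using assms(4) by (rule mult_left_mono)
    with \<open>t * ?S \<le> t * ?\<sigma>\<close> have "- (t + \<delta>) * ?\<sigma> \<le> real N * (- \<delta> * c) + - t * ?S"
      by (simp add: algebra_simps)
    then have "exp (- (t + \<delta>) * ?\<sigma>) \<le> exp (real N * (- \<delta> * c) + - t * ?S)" by simp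
    also have "\<dots> = q * exp (- t * ?S)" by (simp only: q_def exp_add exp_of_nat_mult)
    also have "\<dots> \<le> q * prob (bowen_ball X f \<alpha> (m y) y \<epsilon>)"
      using m_heavy[OF that] by (auto simp: q_def intro!: mult_left_mono)
    finally show ?thesis .
  qed
  have "M_n X f \<alpha> K (t + \<delta>) (2 * \<epsilon>) N \<phi> \<le>
      (\<integral>\<^sup>+ y. ennreal (exp (- (t + \<delta>) * ball_sup_birkhoff X f \<alpha> \<phi> (m y) y (2 * \<epsilon>))) \<partial>count_space Y)"
    using Y(2) Y_X m_ge cover by (intro M_n_le_countable_cover_sum) auto
  also have "\<dots> \<le> (\<integral>\<^sup>+ y. ennreal q * emeasure \<mu> (bowen_ball X f \<alpha> (m y) y \<epsilon>) \<partial>count_space Y)"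
    using term_le by (intro nn_integral_mono)
      (simp add: emeasure_eq_measure q_def ennreal_mult[symmetric] ennreal_leI)
  also have "\<dots> = ennreal q * emeasure \<mu> (\<Union>y\<in>Y. bowen_ball X f \<alpha> (m y) y \<epsilon>)"
    using Y(2,3) by (simp add: nn_integral_cmult emeasure_UN_countable events_bowen_ball)
  also have "\<dots> \<le> ennreal q * 1"
    by (intro mult_left_mono emeasure_le_1) simp
  finally show ?thesis by (simp add: q_def)
qed

lemma dim_BS_le:
  assumes "K \<subseteq> X" "0 \<le> s" "\<forall>x\<in>K. local_BK X f \<mu> \<alpha> \<phi> x \<le> ereal s"
  shows "dim_BS X f \<alpha> K \<phi> \<le> ereal s"
  unfolding dim_BS_eq_SUP
proof (rule SUP_least)
  fix \<epsilon> :: real assume "\<epsilon> \<in> {0<..}"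
  then have "0 < \<epsilon>" by simp
  show "M_crit X f \<alpha> K \<epsilon> \<phi> \<le> ereal s"
  proof (rule ereal_le_epsilon2)
    fix e :: real assume "0 < e"
    define \<delta> where "\<delta> = e / 2"
    obtain c where c: "0 < c" "\<forall>y\<in>X. c \<le> \<phi> y" using \<phi>_bounds by metis
    have heavy: "\<forall>x\<in>K. \<exists>\<^sub>F n in sequentially.
        exp (- (s + \<delta>) * birkhoff f \<phi> n x) < prob (bowen_ball X f \<alpha> n x (\<epsilon> / 2))"
    proof
      fix x assume "x \<in> K"
      moreover have "local_BK X f \<mu> \<alpha> \<phi> x < ereal (s + \<delta>)"
      proof (rule le_less_trans)
        show "local_BK X f \<mu> \<alpha> \<phi> x \<le> ereal s" using assms(3) \<open>x \<in> K\<close> by blast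
        show "ereal s < ereal (s + \<delta>)" using \<open>0 < e\<close> by (simp add: \<delta>_def)
      qed
      ultimately show "\<exists>\<^sub>F n in sequentially.
          exp (- (s + \<delta>) * birkhoff f \<phi> n x) < prob (bowen_ball X f \<alpha> n x (\<epsilon> / 2))"
        using assms(1) \<open>0 < \<epsilon>\<close> by (intro frequently_prob_bowen_ball_gt) auto
    qed
    have eq: "s + \<delta> + \<delta> = s + e" "2 * (\<epsilon> / 2) = \<epsilon>" by (simp_all add: \<delta>_def)
    have bound: "M_n X f \<alpha> K (s + e) \<epsilon> n \<phi> \<le> ennreal (exp (- \<delta> * c) ^ n)" if "0 < n" for n
      using M_n_le_of_frequently_heavy_balls[OF assms(1) _ _ _ that _ c(2) heavy, of \<delta>]
        \<open>0 < \<epsilon>\<close> \<open>0 < e\<close> assms(2) c(1)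
      unfolding eq by (simp add: \<delta>_def)
    have "(\<lambda>n. ennreal (exp (- \<delta> * c) ^ n)) \<longlonglongrightarrow> ennreal 0"
      using \<open>0 < e\<close> c(1) by (intro tendsto_ennrealI LIMSEQ_realpow_zero) (simp_all add: \<delta>_def)
    with M_n_tendsto_M_s have "M_s X f \<alpha> K (s + e) \<epsilon> \<phi> \<le> ennreal 0"
      by (rule LIMSEQ_le) (use bound in \<open>auto intro!: exI[of _ 1]\<close>)
    then have "M_crit X f \<alpha> K \<epsilon> \<phi> \<le> ereal (s + e)"
      by (intro M_crit_le) simp
    then show "M_crit X f \<alpha> K \<epsilon> \<phi> \<le> ereal s + ereal e" by simp
  qed
qed

lemma prob_bowen_ball_le_of_mem_light:
  assumes "0 < m" "y \<in> X" "0 < \<epsilon>" "0 \<le> t" "0 < c" "\<forall>y\<in>X. c \<le> \<phi> y" "0 \<le> \<eta>"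
    and close: "\<forall>u\<in>X. \<forall>v\<in>X. dist u v < 2 * \<epsilon> \<longrightarrow> \<bar>\<phi> u - \<phi> v\<bar> \<le> \<eta>"
    and "2 * \<epsilon> \<le> r" "s \<le> t * (1 - \<eta> / c)"
    and x: "x \<in> bowen_ball X f \<alpha> m y \<epsilon>" "prob (bowen_ball X f \<alpha> m x r) \<le> exp (- t * birkhoff f \<phi> m x)"
  shows "prob (bowen_ball X f \<alpha> m y \<epsilon>) \<le> exp (- s * ball_sup_birkhoff X f \<alpha> \<phi> m y \<epsilon>)"
proof -
  let ?\<sigma> = "ball_sup_birkhoff X f \<alpha> \<phi> m y \<epsilon>"
  have "x \<in> X" using x(1) bowen_ball_subset by blast
  have ball: "bowen_ball X f \<alpha> m y \<epsilon> \<subseteq> bowen_ball X f \<alpha> m x (2 * \<epsilon>)"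
    using assms(1) x(1) by (rule bowen_ball_subset_double)
  have "real m * c \<le> ?\<sigma>"
    using assms(1-3,6) by (rule ball_sup_birkhoff_ge)
  moreover have "?\<sigma> \<le> birkhoff f \<phi> m x + real m * \<eta>"
  proof (rule ball_sup_birkhoff_le[OF assms(1-3)])
    fix z assume z: "z \<in> bowen_ball X f \<alpha> m y \<epsilon>"
    with ball have "z \<in> bowen_ball X f \<alpha> m x (2 * \<epsilon>)" by blast
    then have "\<forall>j<m. dist ((f ^^ j) x) ((f ^^ j) z) < 2 * \<epsilon>"
      using \<alpha>_nonneg assms(1) dist_funpow_less_of_mem_bowen_ball by blast
    moreover have "z \<in> X" using z bowen_ball_subset by blast
    ultimately show "birkhoff f \<phi> m z \<le> birkhoff f \<phi> m x + real m * \<eta>"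
      using birkhoff_le_of_orbits_close[OF f_into \<open>x \<in> X\<close> _ _ close] by blast
  qed
  ultimately have "s * ?\<sigma> \<le> t * birkhoff f \<phi> m x"
    using assms(4,5,7,10) by (intro weighted_exponent_le)
  have "bowen_ball X f \<alpha> m y \<epsilon> \<subseteq> bowen_ball X f \<alpha> m x r"
    using ball bowen_ball_mono[OF assms(9)] by (rule subset_trans)
  then have "prob (bowen_ball X f \<alpha> m y \<epsilon>) \<le> prob (bowen_ball X f \<alpha> m x r)"
    by (simp add: finite_measure_mono events_bowen_ball)
  also have "\<dots> \<le> exp (- t * birkhoff f \<phi> m x)" by (rule x(2))
  also have "\<dots> \<le> exp (- s * ?\<sigma>)"
    using \<open>s * ?\<sigma> \<le> t * birkhoff f \<phi> m x\<close> by simp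
  finally show ?thesis .
qed

lemma mass_distribution_le_M_n:
  assumes "A \<subseteq> K" "K \<subseteq> X" "0 < \<epsilon>" "0 < n" "0 \<le> t" "0 < c" "\<forall>y\<in>X. c \<le> \<phi> y" "0 \<le> \<eta>"
    and close: "\<forall>u\<in>X. \<forall>v\<in>X. dist u v < 2 * \<epsilon> \<longrightarrow> \<bar>\<phi> u - \<phi> v\<bar> \<le> \<eta>"
    and "2 * \<epsilon> \<le> r"
    and light: "\<forall>x\<in>A. \<forall>k\<ge>n. prob (bowen_ball X f \<alpha> k x r) \<le> exp (- t * birkhoff f \<phi> k x)"
    and s: "s \<le> t * (1 - \<eta> / c)"
    and lower: "\<And>E. E \<in> events \<Longrightarrow> A \<subseteq> E \<Longrightarrow> a \<le> prob E"
  shows "ennreal a \<le> M_n X f \<alpha> K s \<epsilon> n \<phi>"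
  unfolding M_n_eq_INF_bowen_covers
proof (rule INF_greatest, clarify)
  fix I y m assume "(I, y, m) \<in> bowen_covers X f \<alpha> K \<epsilon> n"
  then have cover: "\<And>i. i \<in> I \<Longrightarrow> y i \<in> X \<and> n \<le> m i"
    and covers_K: "K \<subseteq> (\<Union>i\<in>I. bowen_ball X f \<alpha> (m i) (y i) \<epsilon>)"
    by (simp_all add: mem_bowen_covers)
  define E where "E i = (if bowen_ball X f \<alpha> (m i) (y i) \<epsilon> \<inter> A = {} then {}
    else bowen_ball X f \<alpha> (m i) (y i) \<epsilon>)" for i
  have E_events: "E i \<in> events" for i
    by (simp add: E_def events_bowen_ball)
  have "A \<subseteq> (\<Union>i\<in>I. E i)"
    using assms(1) covers_K by (force simp: E_def)
  moreover have "(\<Union>i\<in>I. E i) \<in> events"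
    using E_events by (intro sets.countable_UN'') simp_all
  ultimately have "a \<le> prob (\<Union>i\<in>I. E i)" by (rule lower[rotated])
  then have "ennreal a \<le> emeasure \<mu> (\<Union>i\<in>I. E i)"
    by (simp add: emeasure_eq_measure ennreal_leI)
  also have "\<dots> \<le> (\<integral>\<^sup>+ i. emeasure \<mu> (E i) \<partial>count_space I)"
    using E_events by (rule emeasure_UN_le_nn_integral_count_space)
  also have "\<dots> \<le> (\<integral>\<^sup>+ i. ennreal (exp (- s * ball_sup_birkhoff X f \<alpha> \<phi> (m i) (y i) \<epsilon>)) \<partial>count_space I)"
  proof (intro nn_integral_mono)
    fix i assume "i \<in> space (count_space I)"
    then have yi: "y i \<in> X" "0 < m i" "n \<le> m i" using cover assms(4) by fastforce+
    show "emeasure \<mu> (E i) \<le> ennreal (exp (- s * ball_sup_birkhoff X f \<alpha> \<phi> (m i) (y i) \<epsilon>))"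
    proof (cases "bowen_ball X f \<alpha> (m i) (y i) \<epsilon> \<inter> A = {}")
      case False
      then obtain x where x: "x \<in> bowen_ball X f \<alpha> (m i) (y i) \<epsilon>" "x \<in> A" by blast
      with light yi(3) have "prob (bowen_ball X f \<alpha> (m i) x r) \<le> exp (- t * birkhoff f \<phi> (m i) x)"
        by blast
      with x(1) have "prob (bowen_ball X f \<alpha> (m i) (y i) \<epsilon>) \<le>
          exp (- s * ball_sup_birkhoff X f \<alpha> \<phi> (m i) (y i) \<epsilon>)"
        by (intro prob_bowen_ball_le_of_mem_light[OF yi(2,1) assms(3,5-8) close assms(10) s])
      with False show ?thesis
        by (simp add: E_def emeasure_eq_measure ennreal_leI)
    qed (simp add: E_def)
  qed
  finally show "ennreal a \<le> (\<integral>\<^sup>+ i. ennreal (exp (- s * ball_sup_birkhoff X f \<alpha> \<phi> (m i) (y i) \<epsilon>))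
      \<partial>count_space I)" .
qed

lemma subset_UN_uniformly_light:
  assumes "K \<subseteq> X" "\<forall>x\<in>K. ereal t < local_BK X f \<mu> \<alpha> \<phi> x"
  shows "K \<subseteq> (\<Union>N. {x\<in>K. \<forall>n\<ge>N. prob (bowen_ball X f \<alpha> n x (1 / Suc N)) \<le> exp (- t * birkhoff f \<phi> n x)})"
proof
  fix x assume x: "x \<in> K"
  have "x \<in> X" "ereal t < local_BK X f \<mu> \<alpha> \<phi> x" using x assms by auto
  then obtain r where "0 < r"
    and "\<forall>\<^sub>F n in sequentially. prob (bowen_ball X f \<alpha> n x r) \<le> exp (- t * birkhoff f \<phi> n x)"
    by (rule eventually_prob_bowen_ball_le)
  then obtain N0 where N0: "\<And>n. N0 \<le> n \<Longrightarrow> prob (bowen_ball X f \<alpha> n x r) \<le> exp (- t * birkhoff f \<phi> n x)"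
    unfolding eventually_sequentially by blast
  obtain k where k: "inverse (real (Suc k)) < r" using reals_Archimedean[OF \<open>0 < r\<close>] by blast
  define N where "N = max N0 k"
  have "1 / real (Suc N) \<le> inverse (real (Suc k))"
    unfolding N_def by (simp add: field_simps)
  with k have radius: "1 / real (Suc N) \<le> r" by linarith
  have "prob (bowen_ball X f \<alpha> n x (1 / Suc N)) \<le> exp (- t * birkhoff f \<phi> n x)" if "N \<le> n" for n
  proof -
    have "prob (bowen_ball X f \<alpha> n x (1 / Suc N)) \<le> prob (bowen_ball X f \<alpha> n x r)"
      using bowen_ball_mono[OF radius] by (intro finite_measure_mono events_bowen_ball)
    also have "\<dots> \<le> exp (- t * birkhoff f \<phi> n x)"
      using that by (intro N0) (simp add: N_def)
    finally show ?thesis .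
  qed
  with x show "x \<in> (\<Union>N. {x\<in>K. \<forall>n\<ge>N. prob (bowen_ball X f \<alpha> n x (1 / Suc N)) \<le> exp (- t * birkhoff f \<phi> n x)})"
    by blast
qed

text \<open>The sets of points with uniform decay of ball masses are not measurable in general, so
  positivity of \<open>\<mu>\<close> on one of them is stated as a lower bound on the measure of every
  measurable superset.\<close>

lemma exists_uniformly_light_set:
  assumes "K \<in> events" "0 < prob K" "\<forall>x\<in>K. ereal t < local_BK X f \<mu> \<alpha> \<phi> x"
  obtains N a where "0 < a"
    "\<And>E. E \<in> events \<Longrightarrow>
      {x\<in>K. \<forall>n\<ge>N. prob (bowen_ball X f \<alpha> n x (1 / Suc N)) \<le> exp (- t * birkhoff f \<phi> n x)} \<subseteq> E \<Longrightarrow>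
      a \<le> prob E"
proof -
  define A where "A N = {x\<in>K. \<forall>n\<ge>N. prob (bowen_ball X f \<alpha> n x (1 / Suc N)) \<le> exp (- t * birkhoff f \<phi> n x)}"
    for N
  have "K \<subseteq> (\<Union>N. A N)"
    unfolding A_def using events_subset[OF assms(1)] assms(3) by (rule subset_UN_uniformly_light)
  have "\<exists>N. \<not> (\<exists>Z\<in>null_sets \<mu>. A N \<subseteq> Z)"
  proof (rule ccontr)
    assume "\<nexists>N. \<not> (\<exists>Z\<in>null_sets \<mu>. A N \<subseteq> Z)"
    then obtain Z where Z: "\<And>N. Z N \<in> null_sets \<mu>" "\<And>N. A N \<subseteq> Z N" by metis
    with \<open>K \<subseteq> (\<Union>N. A N)\<close> have "K \<subseteq> (\<Union>N. Z N)" by blast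
    with Z(1) assms(1) have "K \<in> null_sets \<mu>" by (meson null_sets_UN null_sets_subset)
    with assms(2) show False by (simp add: measure_def null_setsD1)
  qed
  then obtain N where "\<not> (\<exists>Z\<in>null_sets \<mu>. A N \<subseteq> Z)" ..
  then obtain a where "0 < a" "\<And>E. E \<in> events \<Longrightarrow> A N \<subseteq> E \<Longrightarrow> a \<le> prob E"
    by (rule measure_lower_bound_of_not_null) blast
  then show thesis unfolding A_def by (rule that)
qed

lemma M_crit_ge_of_local_BK_ge:
  assumes "K \<in> events" "0 < prob K" "0 < w" "w < s" "\<forall>x\<in>K. ereal s \<le> local_BK X f \<mu> \<alpha> \<phi> x"
  obtains \<epsilon> where "0 < \<epsilon>" "ereal w \<le> M_crit X f \<alpha> K \<epsilon> \<phi>"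
proof -
  define \<delta> where "\<delta> = (s - w) / 2"
  define t where "t = s - \<delta>"
  obtain c where c: "0 < c" "\<forall>y\<in>X. c \<le> \<phi> y" using \<phi>_bounds by metis
  define \<eta> where "\<eta> = \<delta> * c / t"
  have "0 < \<delta>" "0 < t" using assms(3,4) by (simp_all add: \<delta>_def t_def)
  then have "0 < \<eta>" using c(1) by (simp add: \<eta>_def)
  have "\<eta> / c = \<delta> / t" using c(1) by (simp add: \<eta>_def)
  then have "t * (1 - \<eta> / c) = t - \<delta>" using \<open>0 < t\<close> by (simp add: right_diff_distrib)
  also have "\<dots> = w" by (simp add: t_def \<delta>_def)
  finally have exponent: "t * (1 - \<eta> / c) = w" .
  have "\<forall>x\<in>K. ereal t < local_BK X f \<mu> \<alpha> \<phi> x"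
    using assms(5) \<open>0 < \<delta>\<close> by (auto simp: t_def intro: less_le_trans[rotated])
  with assms(1,2) obtain N a where "0 < a" and lower: "\<And>E. E \<in> events \<Longrightarrow>
      {x\<in>K. \<forall>n\<ge>N. prob (bowen_ball X f \<alpha> n x (1 / Suc N)) \<le> exp (- t * birkhoff f \<phi> n x)} \<subseteq> E \<Longrightarrow>
      a \<le> prob E"
    by (rule exists_uniformly_light_set) blast
  obtain d where "0 < d" and close: "\<forall>u\<in>X. \<forall>v\<in>X. dist u v < d \<longrightarrow> \<bar>\<phi> u - \<phi> v\<bar> \<le> \<eta>"
    using \<phi>_uniformly_close[OF \<open>0 < \<eta>\<close>] by blast
  define \<epsilon> where "\<epsilon> = min (d / 2) (1 / (2 * real (Suc N)))"
  have "0 < \<epsilon>" using \<open>0 < d\<close> by (simp add: \<epsilon>_def)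
  have "\<epsilon> \<le> 1 / (2 * real (Suc N))" "\<epsilon> \<le> d / 2"
    by (simp_all add: \<epsilon>_def)
  then have radius: "2 * \<epsilon> \<le> 1 / real (Suc N)" "2 * \<epsilon> \<le> d"
    by (simp_all add: field_simps)
  have "ereal w \<le> M_crit X f \<alpha> K \<epsilon> \<phi>"
  proof (rule le_M_crit)
    fix s' assume "s' \<le> w"
    have "ennreal a \<le> M_n X f \<alpha> K s' \<epsilon> (Suc N) \<phi>"
    proof (rule mass_distribution_le_M_n[OF _ events_subset[OF assms(1)] \<open>0 < \<epsilon>\<close> _ _ c _ _ radius(1)])
      show "\<forall>u\<in>X. \<forall>v\<in>X. dist u v < 2 * \<epsilon> \<longrightarrow> \<bar>\<phi> u - \<phi> v\<bar> \<le> \<eta>"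
        using close radius(2) by force
      show "s' \<le> t * (1 - \<eta> / c)" using \<open>s' \<le> w\<close> exponent by simp
      show "\<forall>x\<in>{x\<in>K. \<forall>n\<ge>N. prob (bowen_ball X f \<alpha> n x (1 / Suc N)) \<le> exp (- t * birkhoff f \<phi> n x)}.
          \<forall>k\<ge>Suc N. prob (bowen_ball X f \<alpha> k x (1 / Suc N)) \<le> exp (- t * birkhoff f \<phi> k x)"
        by (simp add: Suc_le_eq)
    qed (use \<open>0 < t\<close> \<open>0 < \<eta>\<close> lower in auto)
    also have "\<dots> \<le> M_s X f \<alpha> K s' \<epsilon> \<phi>" by (rule M_n_le_M_s)
    finally show "M_s X f \<alpha> K s' \<epsilon> \<phi> \<noteq> 0"
      using \<open>0 < a\<close> by (metis ennreal_eq_0_iff not_le order_antisym zero_le)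
  qed
  with \<open>0 < \<epsilon>\<close> show thesis by (rule that)
qed

lemma dim_BS_ge:
  assumes "K \<in> events" "0 < prob K" "0 < s" "\<forall>x\<in>K. ereal s \<le> local_BK X f \<mu> \<alpha> \<phi> x"
  shows "ereal s \<le> dim_BS X f \<alpha> K \<phi>"
proof (rule dense_le_bounded[of "ereal 0"])
  show "ereal 0 < ereal s" using assms(3) by simp
next
  fix w assume "ereal 0 < w" "w < ereal s"
  then obtain w' where w: "w = ereal w'" "0 < w'" "w' < s" by (cases w) auto
  with assms obtain \<epsilon> where "0 < \<epsilon>" "ereal w' \<le> M_crit X f \<alpha> K \<epsilon> \<phi>"
    by (elim M_crit_ge_of_local_BK_ge)
  then show "w \<le> dim_BS X f \<alpha> K \<phi>"
    unfolding w(1) dim_BS_eq_SUP by (blast intro: SUP_upper2)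
qed

end

theorem mainTheorem7:
  fixes X :: "'a::metric_space set" and f :: "'a \<Rightarrow> 'a" and \<mu> :: "'a measure"
    and K :: "'a set" and \<alpha> :: real and \<phi> :: "'a \<Rightarrow> real" and s :: real
  assumes "compact X"
    and "continuous_on X f" and "f ` X \<subseteq> X"
    and "prob_space \<mu>" and "sets \<mu> = sets (restrict_space borel X)"
    and "K \<in> sets \<mu>"
    and "\<alpha> \<ge> 0"
    and "continuous_on X \<phi>" and "\<forall>x\<in>X. \<phi> x > 0"
    and "s > 0"
  shows "((\<forall>x\<in>K. local_BK X f \<mu> \<alpha> \<phi> x \<le> ereal s) \<longrightarrow> dim_BS X f \<alpha> K \<phi> \<le> ereal s)
       \<and> ((\<forall>x\<in>K. local_BK X f \<mu> \<alpha> \<phi> x \<ge> ereal s) \<and> measure \<mu> K > 0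
            \<longrightarrow> dim_BS X f \<alpha> K \<phi> \<ge> ereal s)"
proof -
  interpret tds_measure X f \<alpha> \<phi> \<mu>
    using assms by (intro tds_measure.intro tds_potential.intro tds_measure_axioms.intro) auto
  have "K \<subseteq> X" using assms(6) by (rule events_subset)
  show ?thesis
    using dim_BS_le[OF \<open>K \<subseteq> X\<close>] dim_BS_ge[OF assms(6)] assms(10) by auto
qed

end
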